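(* The matrix $$U_6=\tfrac12 S_0\otimes\left(I_2\otimes I_2+\sigma_1\otimes\sigma_1+\sigma_2\otimes\sigma_2+\sigma_3\otimes\sigma_3\right)+\tfrac{1}{\sqrt2}S_3\otimes\left(I_2\otimes\sigma_1+\sigma_2\otimes\sigma_3\right)$$ on $\mathbb{C}^2\otimes\mathbb{C}^2\otimes\mathbb{C}^2$ is unitary and $\mathrm{sr}(U_6)=6$.
   Context: $S_0=\begin{bmatrix}1&0\\0&0\end{bmatrix}$, $S_1=\begin{bmatrix}0&1\\0&0\end{bmatrix}$, $S_2=\begin{bmatrix}0&0\\1&0\end{bmatrix}$, $S_3=\begin{bmatrix}0&0\\0&1\end{bmatrix}$. $I_2$ is the $2\times2$ identity and $\sigma_1=\begin{bmatrix}0&1\\1&0\end{bmatrix}$, $\sigma_2=\begin{bmatrix}0&-i\\i&0\end{bmatrix}$, $\sigma_3=\begin{bmatrix}1&0\\0&-1\end{bmatrix}$ are the Pauli matrices. For a matrix $U$ on $\mathbb{C}^2\otimes\mathbb{C}^2\otimes\mathbb{C}^2$ (systems $A,B,C$), its Schmidt rank $\mathrm{sr}(U)$ is the least integer $r$ such that $U=\sum_{j=1}^r A_j\otimes B_j\otimes C_j$ with $A_j,B_j,C_j$ complex $2\times 2$ matrices (i.e. the tensor rank of $U$). *)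

theory Defs
  imports "HOL-Analysis.Analysis"
begin

text \<open>2x2 complex matrices are elements of complex^2^2; row/column index 1 is the
first basis vector, index 2 the second.\<close>

definition mat2 :: "complex \<Rightarrow> complex \<Rightarrow> complex \<Rightarrow> complex \<Rightarrow> complex^2^2" where
  "mat2 a b c d = (\<chi> i j. if i = 1 then (if j = 1 then a else b) else (if j = 1 then c else d))"

definition S0 :: "complex^2^2" where "S0 = mat2 1 0 0 0"
definition S1 :: "complex^2^2" where "S1 = mat2 0 1 0 0"
definition S2 :: "complex^2^2" where "S2 = mat2 0 0 1 0"
definition S3 :: "complex^2^2" where "S3 = mat2 0 0 0 1"
definition I2 :: "complex^2^2" where "I2 = mat2 1 0 0 1"
definition sigma1 :: "complex^2^2" where "sigma1 = mat2 0 1 1 0"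
definition sigma2 :: "complex^2^2" where "sigma2 = mat2 0 (-\<i>) \<i> 0"
definition sigma3 :: "complex^2^2" where "sigma3 = mat2 1 0 0 (-1)"

text \<open>Operators on C^2 (x) C^2 (x) C^2 (systems A,B,C) are matrices indexed by triples.\<close>
type_synonym op3 = "complex^(2\<times>2\<times>2)^(2\<times>2\<times>2)"

definition tensor2 :: "complex^2^2 \<Rightarrow> complex^2^2 \<Rightarrow> complex^(2\<times>2)^(2\<times>2)" where
  "tensor2 B C = (\<chi> i j. B $ fst i $ fst j * C $ snd i $ snd j)"

definition tensor3 :: "complex^2^2 \<Rightarrow> complex^2^2 \<Rightarrow> complex^2^2 \<Rightarrow> op3" where
  "tensor3 A B C = (\<chi> i j. A $ fst i $ fst j * B $ fst (snd i) $ fst (snd j) * C $ snd (snd i) $ snd (snd j))"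

definition tensor_1_2 :: "complex^2^2 \<Rightarrow> complex^(2\<times>2)^(2\<times>2) \<Rightarrow> op3" where
  "tensor_1_2 A M = (\<chi> i j. A $ fst i $ fst j * M $ snd i $ snd j)"

definition cadjoint :: "complex^'n^'m \<Rightarrow> complex^'m^'n" where
  "cadjoint U = (\<chi> i j. cnj (U $ j $ i))"

definition unitary_mat :: "complex^'n^'n \<Rightarrow> bool" where
  "unitary_mat U \<longleftrightarrow> U ** cadjoint U = mat 1 \<and> cadjoint U ** U = mat 1"

definition schmidt_rank :: "op3 \<Rightarrow> nat" where
  "schmidt_rank U = (LEAST r. \<exists>A B C :: nat \<Rightarrow> complex^2^2.
       U = (\<Sum>j<r. tensor3 (A j) (B j) (C j)))"

definition U6 :: op3 where
  "U6 = (1/2) *\<^sub>R tensor_1_2 S0 (tensor2 I2 I2 + tensor2 sigma1 sigma1 + tensor2 sigma2 sigma2 + tensor2 sigma3 sigma3)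
       + (1 / sqrt 2) *\<^sub>R tensor_1_2 S3 (tensor2 I2 sigma1 + tensor2 sigma2 sigma3)"

end

theory Submission
  imports Defs
begin

text \<open>
  Conditioned on the first qubit, \<open>U6 = S0 \<otimes> SWAP + S3 \<otimes> K\<close> with
  \<open>K = (I \<otimes> \<sigma>1 + \<sigma>2 \<otimes> \<sigma>3)/\<surd>2\<close>; both blocks are unitary, hence so is \<open>U6\<close>, and the
  definition exhibits six product terms.

  For the lower bound, take a decomposition with five terms \<open>A\<^sub>j \<otimes> B\<^sub>j \<otimes> C\<^sub>j\<close> and
  realign each diagonal block, sending \<open>B \<otimes> C\<close> to the rank-one matrix \<open>vec(B\<^sup>T) vec(C)\<^sup>T\<close>.
  This turns SWAP into the identity and \<open>K\<close> into a nilpotent \<open>N\<close>, both expanded over the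
  same five rank-one matrices \<open>x\<^sub>j y\<^sub>j\<^sup>T\<close>. A combination \<open>M = 1 + tN\<close> kills one term, so
  \<open>M = X diag(c) Y\<^sup>T\<close> and the remaining part \<open>D = X diag(b) Y\<^sup>T\<close> of \<open>N\<close> share the four
  factors, and \<open>M\<^sup>-\<^sup>1D\<close> is diagonalisable. But for \<open>u\<close> with \<open>y\<^sub>j\<bullet>u = y\<^sub>j\<bullet>Nu = 0\<close> and
  \<open>Nu \<noteq> 0\<close>, \<open>M\<^sup>-\<^sup>1D\<close> maps \<open>u \<mapsto> Nu \<mapsto> 0\<close>, a nonzero nilpotent action.
\<close>

definition outer_prod :: "'a::times^'n \<Rightarrow> 'a^'m \<Rightarrow> 'a^'m^'n" where
  "outer_prod x y = (\<chi> i j. x $ i * y $ j)"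

definition vdot :: "'a::comm_semiring_1^'n \<Rightarrow> 'a^'n \<Rightarrow> 'a" where
  "vdot y z = (\<Sum>i\<in>UNIV. y $ i * z $ i)"

definition diag_mat :: "('n \<Rightarrow> 'a::zero) \<Rightarrow> 'a^'n^'n" where
  "diag_mat c = (\<chi> i j. if i = j then c i else 0)"

lemma outer_prod_zero_left [simp]: "outer_prod 0 y = (0 :: 'a::mult_zero^'m^'n)"
  by (simp add: outer_prod_def vec_eq_iff)

lemma vdot_smult_right: "vdot y (c *s z) = c * vdot y z"
  by (simp add: vdot_def sum_distrib_left mult_ac)

lemma outer_prod_mult_vector: "outer_prod x y *v z = vdot y z *s (x :: 'a::comm_semiring_1^'n)"
  by (simp add: outer_prod_def vdot_def matrix_vector_mult_def vec_eq_iff sum_distrib_left mult_ac)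

lemma sum_outer_prod_mult_vector:
  "(\<Sum>k\<in>S. outer_prod (x k) (y k)) *v z = (\<Sum>k\<in>S. vdot (y k) z *s (x k :: 'a::comm_semiring_1^'n))"
  by (simp add: vec_eq_iff matrix_vector_mult_def sum_component sum_distrib_right
      outer_prod_def vdot_def sum_distrib_left mult_ac sum.swap[of _ S])

lemma diag_mat_mult_vector: "diag_mat c *v z = (\<chi> k. c k * z $ k)"
  by (simp add: diag_mat_def matrix_vector_mult_def vec_eq_iff if_distrib if_distribR cong: if_cong)

lemma det_diag_mat: "det (diag_mat c) = (\<Prod>k\<in>UNIV. c k)"
  by (subst det_diagonal) (auto simp: diag_mat_def)

lemma sum_outer_prod_eq_factorization:
  assumes "bij_betw g (UNIV :: 'n set) S"
  shows "(\<Sum>k\<in>S. outer_prod (c k *s x k) (y k)) =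
    (\<chi> i k. x (g k) $ i) ** diag_mat (c \<circ> g) ** transpose (\<chi> i k. y (g k) $ i :: 'a::comm_semiring_1^'n^'m)"
proof -
  have "(\<Sum>k\<in>S. outer_prod (c k *s x k) (y k)) = (\<Sum>k\<in>UNIV. outer_prod (c (g k) *s x (g k)) (y (g k)))"
    using sum.reindex_bij_betw[OF assms, of "\<lambda>k. outer_prod (c k *s x k) (y k)"] by simp
  then show ?thesis
    by (simp add: vec_eq_iff matrix_matrix_mult_def diag_mat_def transpose_def outer_prod_def
        sum_component if_distrib if_distribR mult_ac cong: if_cong)
qed

lemma diagonal_pencil_kernel_trivial:
  fixes X Y :: "'a::field^'n^'n"
  assumes inv: "invertible (X ** diag_mat c ** transpose Y)"
    and eq: "(X ** diag_mat c ** transpose Y) *v v = (X ** diag_mat b ** transpose Y) *v w"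
    and ker: "(X ** diag_mat b ** transpose Y) *v v = 0"
  shows "v = 0"
proof -
  have "det X * (\<Prod>k\<in>UNIV. c k) * det Y \<noteq> 0"
    using inv by (simp add: invertible_det_nz det_mul det_diag_mat)
  then have X: "inj ((*v) X)" and c: "\<And>k. c k \<noteq> 0" and Y: "inj ((*v) (transpose Y))"
    by (auto intro: inj_matrix_vector_mult simp: invertible_det_nz)
  define p q where "p = transpose Y *v v" and "q = transpose Y *v w"
  have "X *v (\<chi> k. c k * p $ k) = X *v (\<chi> k. b k * q $ k)"
    using eq by (simp add: p_def q_def matrix_vector_mul_assoc matrix_mul_assoc diag_mat_mult_vector[symmetric]
        del: transpose_matrix_vector)
  then have "(\<chi> k. c k * p $ k) = (\<chi> k. b k * q $ k)"
    by (rule injD[OF X])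
  then have cp: "c k * p $ k = b k * q $ k" for k
    by (simp add: vec_eq_iff)
  have "X *v (\<chi> k. b k * p $ k) = X *v 0"
    using ker by (simp add: p_def matrix_vector_mul_assoc matrix_mul_assoc diag_mat_mult_vector[symmetric]
        del: transpose_matrix_vector)
  then have "(\<chi> k. b k * p $ k) = 0"
    by (rule injD[OF X])
  then have bp: "b k * p $ k = 0" for k
    by (simp add: vec_eq_iff)
  have "p $ k = 0" for k
  proof -
    have "b k * (b k * q $ k) = 0"
      using cp[of k] bp[of k] by (metis mult.left_commute mult_zero_right)
    then show ?thesis using cp[of k] c[of k] by auto
  qed
  then have "transpose Y *v v = transpose Y *v 0"
    by (simp add: p_def vec_eq_iff del: transpose_matrix_vector)
  then show ?thesis
    by (rule injD[OF Y])
qed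

lemma sum_outer_prod_pencil_kernel_trivial:
  fixes x y :: "nat \<Rightarrow> 'a::field^'n"
  assumes "finite S" and "card S = CARD('n)"
    and "invertible (\<Sum>k\<in>S. outer_prod (c k *s x k) (y k))"
    and "(\<Sum>k\<in>S. outer_prod (c k *s x k) (y k)) *v v = (\<Sum>k\<in>S. outer_prod (b k *s x k) (y k)) *v w"
    and "(\<Sum>k\<in>S. outer_prod (b k *s x k) (y k)) *v v = 0"
  shows "v = 0"
proof -
  obtain g where g: "bij_betw g (UNIV :: 'n set) S"
    using assms(1,2) finite_same_card_bij[of "UNIV :: 'n set" S] by auto
  from assms(3-) show ?thesis
    unfolding sum_outer_prod_eq_factorization[OF g] by (rule diagonal_pencil_kernel_trivial)
qed

lemma sum_outer_prod_combination_mult_vector: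
  fixes x :: "'k \<Rightarrow> 'a::field^'n"
  shows "(\<Sum>k\<in>K. outer_prod ((a k + t * b k) *s x k) (y k)) *v z =
    (\<Sum>k\<in>K. outer_prod (a k *s x k) (y k)) *v z + t *s ((\<Sum>k\<in>K. outer_prod (b k *s x k) (y k)) *v z)"
  unfolding sum_outer_prod_mult_vector vec.scale_sum_right sum.distrib[symmetric]
  by (rule sum.cong) (simp_all add: vector_smult_assoc vector_sadd_rdistrib mult.left_commute)

lemma invertible_if_unipotent:
  fixes M N :: "'a::field^'n^'n"
  assumes "N ** N = 0" and "\<And>z. M *v z = z + t *s (N *v z)"
  shows "invertible M"
proof -
  have "N *v (N *v z) = 0" for z
    using assms(1) by (simp add: matrix_vector_mul_assoc)
  then have "M *v (z - t *s (N *v z)) = z" for z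
    by (simp add: assms(2) vector_scalar_commute matrix_vector_mult_diff_distrib)
  then have "surj ((*v) M)"
    by (metis surj_def)
  then show ?thesis
    by (simp add: invertible_right_inverse matrix_right_invertible_surjective)
qed

lemma no_joint_outer_prod_expansion:
  fixes N :: "'a::field^'n^'n" and x y :: "nat \<Rightarrow> 'a^'n"
  assumes nilpotent: "N ** N = 0"
    and escape: "\<And>z. \<exists>u. vdot z u = 0 \<and> vdot z (N *v u) = 0 \<and> N *v u \<noteq> 0"
    and id_expansion: "mat 1 = (\<Sum>k<Suc CARD('n). outer_prod (\<alpha> k *s x k) (y k))"
    and N_expansion: "N = (\<Sum>k<Suc CARD('n). outer_prod (\<beta> k *s x k) (y k))"
  shows False
proof -
  let ?K = "{..<Suc CARD('n)}"
  have NN: "N *v (N *v z) = 0" for z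
    using nilpotent by (simp add: matrix_vector_mul_assoc)
  have "N \<noteq> 0"
    using escape[of 0] by auto
  then have "\<exists>j\<in>?K. \<beta> j \<noteq> 0"
    unfolding N_expansion by (rule contrapos_np) simp
  then obtain j where j: "j \<in> ?K" "\<beta> j \<noteq> 0" ..
  define S where "S = ?K - {j}"
  define t where "t = - \<alpha> j / \<beta> j"
  define M where "M = (\<Sum>k\<in>S. outer_prod ((\<alpha> k + t * \<beta> k) *s x k) (y k))"
  define D where "D = (\<Sum>k\<in>S. outer_prod (\<beta> k *s x k) (y k))"
  have "(\<Sum>k\<in>?K. outer_prod ((\<alpha> k + t * \<beta> k) *s x k) (y k)) =
      outer_prod ((\<alpha> j + t * \<beta> j) *s x j) (y j) + M"
    unfolding M_def S_def using j by (intro sum.remove) auto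
  moreover have "\<alpha> j + t * \<beta> j = 0"
    using j by (simp add: t_def)
  ultimately have "M = (\<Sum>k\<in>?K. outer_prod ((\<alpha> k + t * \<beta> k) *s x k) (y k))"
    by simp
  then have M_mult: "M *v z = z + t *s (N *v z)" for z
    by (simp only: sum_outer_prod_combination_mult_vector flip: id_expansion N_expansion) simp
  have "N = outer_prod (\<beta> j *s x j) (y j) + D"
    unfolding N_expansion D_def S_def using j by (intro sum.remove) auto
  then have N_mult: "N *v z = vdot (y j) z *s (\<beta> j *s x j) + D *v z" for z
    by (simp add: matrix_vector_mult_add_rdistrib outer_prod_mult_vector)
  have "invertible M"
    using nilpotent M_mult by (rule invertible_if_unipotent)
  obtain u where u: "vdot (y j) u = 0" "vdot (y j) (N *v u) = 0" "N *v u \<noteq> 0"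
    using escape by blast
  have "M *v (N *v u) = N *v u"
    by (simp add: M_mult NN)
  also have "\<dots> = D *v u"
    using u(1) by (simp add: N_mult)
  finally have eq: "M *v (N *v u) = D *v u" .
  have ker: "D *v (N *v u) = 0"
    using N_mult[of "N *v u"] u(2) NN by simp
  have "finite S" "card S = CARD('n)"
    using j by (simp_all add: S_def)
  then have "N *v u = 0"
    using \<open>invertible M\<close> eq ker unfolding M_def D_def by (rule sum_outer_prod_pencil_kernel_trivial)
  with u(3) show False ..
qed

lemma ex_nontrivial_root_linear2: "\<exists>s t. (s \<noteq> 0 \<or> t \<noteq> 0) \<and> a * s + b * t = (0 :: 'a::field)"
proof (cases "a = 0 \<and> b = 0")
  case True
  then show ?thesis by (intro exI[of _ 1] exI[of _ 0]) simp
next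
  case False
  then show ?thesis by (intro exI[of _ b] exI[of _ "- a"]) (auto simp: mult.commute)
qed

lemma ex_solution_linear2:
  assumes "a \<noteq> 0 \<or> b \<noteq> 0"
  shows "\<exists>s t. a * s + b * t = (k :: 'a::field)"
proof (cases "a = 0")
  case True
  with assms show ?thesis by (intro exI[of _ 0] exI[of _ "k / b"]) simp
next
  case False
  then show ?thesis by (intro exI[of _ "k / a"] exI[of _ 0]) simp
qed

lemma matrix_add_rdistrib: "(A + B) ** C = A ** C + B ** (C :: 'a::semiring_1^'p^'n)"
  by (simp add: matrix_matrix_mult_def vec_eq_iff sum.distrib distrib_right)

lemma scaleR_matrix_component:
  "(r *\<^sub>R M) $ i $ j = of_real r * (M $ i $ j :: 'a::real_algebra_1)"
  by (simp only: vector_scaleR_component) (simp only: scaleR_conv_of_real)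

lemma cadjoint_add: "cadjoint (A + B) = cadjoint A + cadjoint B"
  by (simp add: cadjoint_def vec_eq_iff)

lemma unitary_mat_iff_right_inverse: "unitary_mat U \<longleftrightarrow> U ** cadjoint U = mat 1"
  using matrix_left_right_inverse unfolding unitary_mat_def by blast

lemma tensor_1_2_mult: "tensor_1_2 A M ** tensor_1_2 B N = tensor_1_2 (A ** B) (M ** N)"
  by (simp add: vec_eq_iff tensor_1_2_def matrix_matrix_mult_def sum_product
      sum.cartesian_product UNIV_Times_UNIV case_prod_beta mult_ac)

lemma cadjoint_tensor_1_2: "cadjoint (tensor_1_2 A M) = tensor_1_2 (cadjoint A) (cadjoint M)"
  by (simp add: vec_eq_iff tensor_1_2_def cadjoint_def)

lemma tensor_1_2_zero_left [simp]: "tensor_1_2 0 M = 0"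
  by (simp add: vec_eq_iff tensor_1_2_def)

lemma tensor_1_2_add_left: "tensor_1_2 (A + B) M = tensor_1_2 A M + tensor_1_2 B M"
  by (simp add: vec_eq_iff tensor_1_2_def distrib_right)

lemma tensor_1_2_add_right: "tensor_1_2 A (M + N) = tensor_1_2 A M + tensor_1_2 A N"
  by (simp add: vec_eq_iff tensor_1_2_def distrib_left)

lemma scaleR_tensor_1_2: "c *\<^sub>R tensor_1_2 A M = tensor_1_2 A (c *\<^sub>R M)"
  by (simp add: vec_eq_iff tensor_1_2_def scaleR_matrix_component mult_ac)

lemma tensor_1_2_mat_1: "tensor_1_2 (mat 1) (mat 1) = mat 1"
  by (simp add: vec_eq_iff tensor_1_2_def mat_def prod_eq_iff)

lemma tensor_1_2_tensor2: "tensor_1_2 A (tensor2 B C) = tensor3 A B C"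
  by (simp add: vec_eq_iff tensor_1_2_def tensor2_def tensor3_def mult_ac)

lemma tensor3_zero_left [simp]: "tensor3 0 B C = 0"
  by (simp add: vec_eq_iff tensor3_def)

lemma tensor3_scaleR_left: "tensor3 (c *\<^sub>R A) B C = c *\<^sub>R tensor3 A B C"
  by (simp add: vec_eq_iff tensor3_def scaleR_matrix_component mult_ac)

definition diag_block :: "'b::finite \<Rightarrow> 'a^('b \<times> 'c::finite)^('b \<times> 'c) \<Rightarrow> 'a^'c^'c" where
  "diag_block a U = (\<chi> i j. U $ (a, i) $ (a, j))"

definition flatten :: "'a^'m::finite^'n::finite \<Rightarrow> 'a^('n \<times> 'm)" where
  "flatten B = (\<chi> u. B $ fst u $ snd u)"

text \<open>Flattening \<open>B\<close> transposed in \<open>realign (B \<otimes> C)\<close> is what makes realignment send the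
  swap operator to the identity.\<close>

definition realign :: "'a^('b::finite \<times> 'c::finite)^('b \<times> 'c) \<Rightarrow> 'a^('c \<times> 'c)^('b \<times> 'b)" where
  "realign M = (\<chi> u v. M $ (snd u, fst v) $ (fst u, snd v))"

lemma realign_diag_block_sum:
  "realign (diag_block a (\<Sum>j\<in>J. U j)) = (\<Sum>j\<in>J. realign (diag_block a (U j)))"
  by (simp add: vec_eq_iff realign_def diag_block_def sum_component)

lemma realign_diag_block_tensor3:
  "realign (diag_block a (tensor3 A B C)) =
    outer_prod (A $ a $ a *s flatten (transpose B)) (flatten C)"
  by (simp add: vec_eq_iff realign_def diag_block_def tensor3_def outer_prod_def flatten_def
      transpose_def)

definition swap_op :: "'a::zero_neq_one^('b::finite \<times> 'b)^('b \<times> 'b)" where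
  "swap_op = (\<chi> i j. if j = prod.swap i then 1 else 0)"

lemma unitary_swap_op: "unitary_mat (swap_op :: complex^('b::finite \<times> 'b)^('b \<times> 'b))"
proof -
  have "(swap_op ** cadjoint swap_op) $ i $ j =
      (\<Sum>k\<in>UNIV. if k = prod.swap i then (if k = prod.swap j then 1 else 0) else 0 :: complex)"
    for i j :: "'b \<times> 'b"
    unfolding matrix_matrix_mult_def swap_op_def cadjoint_def vec_lambda_beta
    by (rule sum.cong) auto
  then show ?thesis
    by (simp add: unitary_mat_iff_right_inverse vec_eq_iff mat_def)
qed

lemma realign_swap_op: "realign swap_op = mat 1"
  by (auto simp: vec_eq_iff realign_def swap_op_def mat_def)

lemma mat2_component [simp]:
  "mat2 a b c d $ 1 $ 1 = a" "mat2 a b c d $ 1 $ 2 = b"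
  "mat2 a b c d $ 2 $ 1 = c" "mat2 a b c d $ 2 $ 2 = d"
  by (simp_all add: mat2_def)

lemma unitary_controlled:
  assumes "unitary_mat P" and "unitary_mat Q"
  shows "unitary_mat (tensor_1_2 S0 P + tensor_1_2 S3 Q)"
proof -
  have S: "S0 ** cadjoint S0 = S0" "S3 ** cadjoint S3 = S3"
    "S0 ** cadjoint S3 = 0" "S3 ** cadjoint S0 = 0" "S0 + S3 = mat 1"
    by (simp_all add: vec_eq_iff forall_2 matrix_matrix_mult_def sum_2 cadjoint_def
        S0_def S3_def mat_def)
  from assms have "P ** cadjoint P = mat 1" "Q ** cadjoint Q = mat 1"
    by (simp_all add: unitary_mat_iff_right_inverse)
  then show ?thesis
    by (simp add: unitary_mat_iff_right_inverse cadjoint_add cadjoint_tensor_1_2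
        matrix_add_ldistrib matrix_add_rdistrib tensor_1_2_mult S
        tensor_1_2_add_left[symmetric] tensor_1_2_mat_1)
qed

lemma diag_block_controlled:
  "diag_block 1 (tensor_1_2 S0 P + tensor_1_2 S3 Q) = P"
  "diag_block 2 (tensor_1_2 S0 P + tensor_1_2 S3 Q) = Q"
  by (simp_all add: vec_eq_iff diag_block_def tensor_1_2_def S0_def S3_def)

lemma controlled_swap_tensor_rank_gt_5:
  fixes Q :: "complex^(2 \<times> 2)^(2 \<times> 2)" and r :: nat and A B C :: "nat \<Rightarrow> complex^2^2"
  assumes nilpotent: "realign Q ** realign Q = 0"
    and escape: "\<And>z. \<exists>u. vdot z u = 0 \<and> vdot z (realign Q *v u) = 0 \<and> realign Q *v u \<noteq> 0"
    and decomposition: "tensor_1_2 S0 swap_op + tensor_1_2 S3 Q = (\<Sum>j<r. tensor3 (A j) (B j) (C j))"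
  shows "5 < r"
proof (rule ccontr)
  assume "\<not> 5 < r"
  define A' where "A' j = (if j < r then A j else 0)" for j
  have "(\<Sum>j<r. tensor3 (A j) (B j) (C j)) = (\<Sum>j<5. tensor3 (A' j) (B j) (C j))"
    using \<open>\<not> 5 < r\<close> by (intro sum.mono_neutral_cong_left) (auto simp: A'_def)
  then have block: "realign (diag_block a (tensor_1_2 S0 swap_op + tensor_1_2 S3 Q)) =
      (\<Sum>j<Suc CARD(2 \<times> 2). outer_prod (A' j $ a $ a *s flatten (transpose (B j))) (flatten (C j)))"
    for a
    by (simp add: decomposition realign_diag_block_sum realign_diag_block_tensor3)
  have "mat 1 =
      (\<Sum>j<Suc CARD(2 \<times> 2). outer_prod (A' j $ 1 $ 1 *s flatten (transpose (B j))) (flatten (C j)))"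
    using block[of 1] by (simp only: diag_block_controlled realign_swap_op)
  moreover have "realign Q =
      (\<Sum>j<Suc CARD(2 \<times> 2). outer_prod (A' j $ 2 $ 2 *s flatten (transpose (B j))) (flatten (C j)))"
    using block[of 2] by (simp only: diag_block_controlled)
  ultimately show False
    by (rule no_joint_outer_prod_expansion[OF nilpotent escape])
qed

definition pauli_block :: "complex^(2 \<times> 2)^(2 \<times> 2)" where
  "pauli_block = (1 / sqrt 2) *\<^sub>R (tensor2 I2 sigma1 + tensor2 sigma2 sigma3)"

lemma U6_controlled: "U6 = tensor_1_2 S0 swap_op + tensor_1_2 S3 pauli_block"
proof -
  have "(1/2) *\<^sub>R (tensor2 I2 I2 + tensor2 sigma1 sigma1 + tensor2 sigma2 sigma2 + tensor2 sigma3 sigma3)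
      = swap_op"
    by (simp add: vec_eq_iff split_paired_All forall_2 tensor2_def swap_op_def
        I2_def sigma1_def sigma2_def sigma3_def scaleR_matrix_component)
      (simp add: scaleR_conv_of_real)
  then show ?thesis
    by (simp add: U6_def pauli_block_def scaleR_tensor_1_2)
qed

lemma U6_eq_sum_6_tensor3:
  "U6 = (\<Sum>j<6. tensor3
      ([(1/2) *\<^sub>R S0, (1/2) *\<^sub>R S0, (1/2) *\<^sub>R S0, (1/2) *\<^sub>R S0,
        (1 / sqrt 2) *\<^sub>R S3, (1 / sqrt 2) *\<^sub>R S3] ! j)
      ([I2, sigma1, sigma2, sigma3, I2, sigma2] ! j)
      ([I2, sigma1, sigma2, sigma3, sigma1, sigma3] ! j))"
  by (simp add: U6_def eval_nat_numeral scaleR_tensor_1_2[symmetric] tensor3_scaleR_left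
      tensor_1_2_add_right tensor_1_2_tensor2 scaleR_add_right add.assoc)

lemma sum_UNIV_2_times_2:
  "(\<Sum>x\<in>(UNIV :: (2 \<times> 2) set). f x) = f (1,1) + f (1,2) + f (2,1) + f (2,2)"
proof -
  have "(\<Sum>x\<in>(UNIV :: (2 \<times> 2) set). f x) = (\<Sum>a\<in>UNIV. \<Sum>b\<in>UNIV. f (a, b))"
    by (subst sum.cartesian_product) (simp add: case_prod_eta)
  then show ?thesis
    by (simp add: sum_2 add.assoc)
qed

lemma unitary_pauli_block: "unitary_mat pauli_block"
  unfolding unitary_mat_iff_right_inverse
  by (simp add: vec_eq_iff split_paired_All forall_2 pauli_block_def tensor2_def matrix_matrix_mult_def
      sum_UNIV_2_times_2 cadjoint_def mat_def I2_def sigma1_def sigma2_def sigma3_def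
      scaleR_matrix_component)
    (simp add: scaleR_conv_of_real)

definition vec4 :: "'a \<Rightarrow> 'a \<Rightarrow> 'a \<Rightarrow> 'a \<Rightarrow> 'a^(2 \<times> 2)" where
  "vec4 a b c d = (\<chi> u. if u = (1,1) then a else if u = (1,2) then b else if u = (2,1) then c else d)"

lemma vec4_component [simp]:
  "vec4 a b c d $ (1,1) = a" "vec4 a b c d $ (1,2) = b"
  "vec4 a b c d $ (2,1) = c" "vec4 a b c d $ (2,2) = d"
  by (simp_all add: vec4_def)

lemma realign_pauli_block_mult_vector:
  "realign pauli_block *v w = of_real (1 / sqrt 2) *s
     vec4 (w $ (1,2) + w $ (2,1)) (\<i> * (w $ (1,1) - w $ (2,2)))
          (- \<i> * (w $ (1,1) - w $ (2,2))) (w $ (1,2) + w $ (2,1))"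
  by (simp add: vec_eq_iff split_paired_All forall_2 matrix_vector_mult_def sum_UNIV_2_times_2
      realign_def pauli_block_def tensor2_def I2_def sigma1_def sigma2_def sigma3_def
      scaleR_matrix_component algebra_simps)
    (simp add: scaleR_conv_of_real field_simps)

lemma realign_pauli_block_nilpotent: "realign pauli_block ** realign pauli_block = 0"
  unfolding matrix_eq
  by (simp add: matrix_vector_mul_assoc[symmetric] realign_pauli_block_mult_vector
      vector_scalar_commute[where A = "realign pauli_block"] vec_eq_iff forall_2 split_paired_All
      algebra_simps)

lemma realign_pauli_block_escape:
  "\<exists>u. vdot z u = 0 \<and> vdot z (realign pauli_block *v u) = 0 \<and> realign pauli_block *v u \<noteq> 0"
proof -
  define A where "A = z $ (1,1) + z $ (2,2)"
  define C where "C = z $ (1,2) - z $ (2,1)"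
  txt \<open>\<open>realign pauli_block *v u\<close> below depends only on \<open>(s, t)\<close>: choose \<open>(s, t) \<noteq> 0\<close> making
    it orthogonal to \<open>z\<close>, then \<open>(p, q)\<close> making \<open>u\<close> orthogonal to \<open>z\<close>.\<close>
  obtain s t p q where st: "s \<noteq> 0 \<or> t \<noteq> 0" and image_orth: "s * A + \<i> * t * C = 0"
    and orth: "z $ (1,1) * t + z $ (1,2) * s + C * p + A * q = 0"
  proof (cases "A \<noteq> 0 \<or> C \<noteq> 0")
    case True
    then obtain p q where "C * p + A * q = - (z $ (1,1) * - A + z $ (1,2) * (\<i> * C))"
      using ex_solution_linear2 by blast
    with True show ?thesis
      by (intro that[of "\<i> * C" "- A" p q]) (auto simp: algebra_simps)
  next
    case False
    obtain s t where "s \<noteq> 0 \<or> t \<noteq> 0" "z $ (1,2) * s + z $ (1,1) * t = 0"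
      using ex_nontrivial_root_linear2 by blast
    with False show ?thesis
      by (intro that[of s t 0 0]) (auto simp: algebra_simps)
  qed
  define u where "u = vec4 (t + q) (s + p) (- p) q"
  have "vdot z (realign pauli_block *v u) = of_real (1 / sqrt 2) * (s * A + \<i> * t * C)"
    by (simp add: u_def realign_pauli_block_mult_vector vdot_smult_right)
      (simp add: vdot_def sum_UNIV_2_times_2 A_def C_def algebra_simps)
  moreover have "vdot z u = 0"
    using orth by (simp add: u_def vdot_def sum_UNIV_2_times_2 A_def C_def algebra_simps)
  moreover have "realign pauli_block *v u \<noteq> 0"
    using st by (auto simp: u_def realign_pauli_block_mult_vector vec_eq_iff forall_2 split_paired_All)
  ultimately show ?thesis
    using image_orth by auto
qed

theorem mainTheorem5:
  shows "unitary_mat U6 \<and> schmidt_rank U6 = 6"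
proof
  show "unitary_mat U6"
    unfolding U6_controlled by (intro unitary_controlled unitary_swap_op unitary_pauli_block)
  show "schmidt_rank U6 = 6"
    unfolding schmidt_rank_def
  proof (rule Least_equality)
    show "\<exists>A B C :: nat \<Rightarrow> complex^2^2. U6 = (\<Sum>j<6. tensor3 (A j) (B j) (C j))"
      using U6_eq_sum_6_tensor3 by blast
    fix r
    assume "\<exists>A B C :: nat \<Rightarrow> complex^2^2. U6 = (\<Sum>j<r. tensor3 (A j) (B j) (C j))"
    then show "6 \<le> r"
      unfolding U6_controlled
      using controlled_swap_tensor_rank_gt_5[OF realign_pauli_block_nilpotent realign_pauli_block_escape]
      by fastforce
  qed
qed

end
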